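(* In $\mathbb{Q}(b)[[q]]$, \[ 1+\sum_{n=1}^{\infty}\frac{q^{n}}{(1-q)(1-q^{2})\cdots(1-q^{n})(1-bq)(1-bq^{2})\cdots(1-bq^{n})} =\sum_{n=0}^{\infty}(-1)^{n}q^{\binom{n+1}{2}}b^{n}\prod_{k=1}^{\infty}\frac{1}{(1-q^{k})(1-bq^{k})}. \] *)

theory Defs
  imports "HOL-Analysis.Analysis" "HOL-Computational_Algebra.Formal_Power_Series"
    "HOL-Computational_Algebra.Fraction_Field" "HOL-Computational_Algebra.Polynomial"
begin

text \<open>The field Q(b) of rational functions in an indeterminate b is rendered as the
  fraction field of the polynomial ring Q[b]; b is the class of the polynomial b.
  Infinite sums and products are taken in the (q-adic) metric topology on fps
  provided by the library.\<close>

definition bvar :: "rat poly fract" where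
  "bvar = Fract [:0, 1:] 1"

abbreviation qvar :: "rat poly fract fps" where
  "qvar \<equiv> fps_X"

abbreviation bconst :: "rat poly fract fps" where
  "bconst \<equiv> fps_const bvar"

end

theory Submission
  imports Defs
begin

(* The identity is proved by truncation.  Write (x;q)_N = prod_{k=1..N} (1 - x q^k) and
   c_m = (-1)^m q^(binom(m+1,2)) x^m.  Exact finite identity (in any commutative ring,
   given inverses ip n of (q;q)_n):
     sum_{n<=N} q^n (prod_{k=n+1..N} (1 - x q^k)) ip n = sum_{m<=N} c_m ip (N - m),
   proved by induction on N from a first-order recurrence satisfied by both sides.
   Dividing by (x;q)_N, the left side becomes the N-th partial sum of the left-hand
   series.  Modulo q^N the right side agrees with (sum_{m<N} c_m) / ((q;q)_N (x;q)_N),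
   because c_m is divisible by q^m and 1/(q;q)_(N-m) agrees with 1/(q;q)_N modulo
   q^(N-m+1). *)

section \<open>A finite identity in commutative rings\<close>

definition euler_term :: "'a::comm_ring_1 \<Rightarrow> 'a \<Rightarrow> nat \<Rightarrow> 'a" where
  "euler_term q x m = (-1)^m * q^(Suc m choose 2) * x^m"

lemma Suc_choose_two_Suc: "Suc (Suc m) choose 2 = (Suc m choose 2) + Suc m"
  by (simp add: choose_two numeral_2_eq_2)

lemma euler_term_0 [simp]: "euler_term q x 0 = 1"
  by (simp add: euler_term_def numeral_2_eq_2)

lemma euler_term_Suc: "euler_term q x (Suc m) = - x * q^Suc m * euler_term q x m"
  by (simp add: euler_term_def Suc_choose_two_Suc power_add algebra_simps)

text \<open>The convolution of the theta terms with inverses of the q-factorials satisfies the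
  same recurrence as the truncated left-hand side.  Only the recurrence
  ip n = (1 - q^(n+1)) ip (n+1) of the inverse q-factorials is used; the proof is a
  telescoping argument.\<close>

lemma euler_convolution_Suc:
  fixes q x :: "'a::comm_ring_1"
  assumes ip0: "ip 0 = 1" and ipS: "\<And>n. ip n = (1 - q^Suc n) * ip (Suc n)"
  shows "(\<Sum>m\<le>Suc N. euler_term q x m * ip (Suc N - m))
       = (1 - x * q^Suc N) * (\<Sum>m\<le>N. euler_term q x m * ip (N - m)) + q^Suc N * ip (Suc N)"
proof -
  let ?e = "euler_term q x"
  define F where "F m = ?e m * q^(Suc N - m) * ip (Suc N - m)" for m
  have split: "?e m * ip (N - m) = ?e m * ip (Suc N - m) - F m" if "m \<le> N" for m
  proof -
    have "Suc N - m = Suc (N - m)" using that by simp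
    then show ?thesis unfolding F_def by (simp add: ipS[of "N - m"] algebra_simps)
  qed
  have shift: "- x * q^Suc N * (?e m * ip (N - m)) = F (Suc m)" if "m \<le> N" for m
  proof -
    have "Suc m + (N - m) = Suc N" using that by simp
    then have "q^Suc N = q^Suc m * q^(N - m)" by (metis power_add)
    then show ?thesis by (simp add: F_def euler_term_Suc algebra_simps)
  qed
  have split_sum: "(\<Sum>m\<le>N. ?e m * ip (N - m)) = (\<Sum>m\<le>N. ?e m * ip (Suc N - m)) - (\<Sum>m\<le>N. F m)"
    by (simp add: split sum_subtractf[symmetric])
  have shift_sum: "(\<Sum>m\<le>N. - x * q^Suc N * (?e m * ip (N - m))) = (\<Sum>m\<le>N. F (Suc m))"
    by (rule sum.cong[OF refl], rule shift) simp
  have F_ends: "F 0 = q^Suc N * ip (Suc N)" "F (Suc N) = ?e (Suc N)"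
    by (simp_all add: F_def ip0)
  have telescope: "(\<Sum>m\<le>N. F (Suc m)) = (\<Sum>m\<le>N. F m) + F (Suc N) - F 0"
    using sum.atMost_Suc_shift[of F N] by simp
  have "(1 - x * q^Suc N) * (\<Sum>m\<le>N. ?e m * ip (N - m))
      = (\<Sum>m\<le>N. ?e m * ip (N - m)) + (\<Sum>m\<le>N. - x * q^Suc N * (?e m * ip (N - m)))"
    by (simp only: sum_distrib_left[symmetric]) (simp add: algebra_simps)
  also have "\<dots> = (\<Sum>m\<le>N. ?e m * ip (Suc N - m)) - (\<Sum>m\<le>N. F m) + (\<Sum>m\<le>N. F (Suc m))"
    by (simp only: split_sum shift_sum)
  also have "\<dots> = (\<Sum>m\<le>Suc N. ?e m * ip (Suc N - m)) - q^Suc N * ip (Suc N)"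
    by (simp add: telescope F_ends ip0)
  finally show ?thesis by simp
qed

theorem finite_q_identity:
  fixes q x :: "'a::comm_ring_1"
  assumes ip0: "ip 0 = 1" and ipS: "\<And>n. ip n = (1 - q^Suc n) * ip (Suc n)"
  shows "(\<Sum>n\<le>N. q^n * (\<Prod>k\<in>{Suc n..N}. 1 - x * q^k) * ip n)
       = (\<Sum>m\<le>N. euler_term q x m * ip (N - m))"
proof (induction N)
  case 0
  show ?case by (simp add: ip0)
next
  case (Suc N)
  have factor: "(\<Prod>k\<in>{Suc n..Suc N}. 1 - x * q^k) = (1 - x * q^Suc N) * (\<Prod>k\<in>{Suc n..N}. 1 - x * q^k)"
    if "n \<le> N" for n
    using that by (simp add: prod.nat_ivl_Suc')
  have "(\<Sum>n\<le>N. q^n * (\<Prod>k\<in>{Suc n..Suc N}. 1 - x * q^k) * ip n)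
      = (\<Sum>n\<le>N. (1 - x * q^Suc N) * (q^n * (\<Prod>k\<in>{Suc n..N}. 1 - x * q^k) * ip n))"
    by (rule sum.cong) (simp_all add: factor)
  then have "(\<Sum>n\<le>Suc N. q^n * (\<Prod>k\<in>{Suc n..Suc N}. 1 - x * q^k) * ip n)
      = (1 - x * q^Suc N) * (\<Sum>n\<le>N. q^n * (\<Prod>k\<in>{Suc n..N}. 1 - x * q^k) * ip n) + q^Suc N * ip (Suc N)"
    by (simp add: sum_distrib_left)
  also have "\<dots> = (1 - x * q^Suc N) * (\<Sum>m\<le>N. euler_term q x m * ip (N - m)) + q^Suc N * ip (Suc N)"
    by (simp only: Suc.IH)
  also have "\<dots> = (\<Sum>m\<le>Suc N. euler_term q x m * ip (Suc N - m))"
    by (rule euler_convolution_Suc[OF ip0 ipS, symmetric])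
  finally show ?case .
qed

section \<open>Congruence of power series modulo powers of X\<close>

text \<open>Convergence in the library's topology on power series is coefficientwise eventual
  equality, so all limits in the theorem are controlled by such congruences.\<close>

definition fps_cong :: "nat \<Rightarrow> 'a::comm_ring_1 fps \<Rightarrow> 'a fps \<Rightarrow> bool" where
  "fps_cong n f g \<longleftrightarrow> fps_X^n dvd (f - g)"

lemma fps_X_power_dvd_iff: "fps_X^n dvd (f :: 'a::comm_ring_1 fps) \<longleftrightarrow> (\<forall>i<n. fps_nth f i = 0)"
proof
  assume "fps_X^n dvd f"
  then obtain h where "f = fps_X^n * h" by (auto elim: dvdE)
  then show "\<forall>i<n. fps_nth f i = 0" by (simp add: fps_X_power_mult_nth)
next
  assume "\<forall>i<n. fps_nth f i = 0"
  then have "f = fps_X^n * fps_shift n f"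
    by (intro fps_ext) (auto simp: fps_X_power_mult_nth)
  then show "fps_X^n dvd f" by (metis dvd_triv_left)
qed

lemma fps_cong_iff: "fps_cong n f g \<longleftrightarrow> (\<forall>i<n. fps_nth f i = fps_nth g i)"
  unfolding fps_cong_def fps_X_power_dvd_iff by simp

lemma fps_cong_refl [simp]: "fps_cong n f f"
  by (simp add: fps_cong_def)

lemma fps_cong_sym: "fps_cong n f g \<Longrightarrow> fps_cong n g f"
  by (auto simp: fps_cong_iff)

lemma fps_cong_trans [trans]: "fps_cong n f g \<Longrightarrow> fps_cong n g h \<Longrightarrow> fps_cong n f h"
  by (auto simp: fps_cong_iff)

lemma fps_cong_mono: "m \<le> n \<Longrightarrow> fps_cong n f g \<Longrightarrow> fps_cong m f g"
  by (auto simp: fps_cong_iff)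

lemma fps_cong_add: "fps_cong n f g \<Longrightarrow> fps_cong n h k \<Longrightarrow> fps_cong n (f + h) (g + k)"
  by (auto simp: fps_cong_iff)

lemma fps_cong_mult:
  assumes "fps_cong n f g" "fps_cong n h k"
  shows "fps_cong n (f * h) (g * k)"
proof -
  have "f * h - g * k = f * (h - k) + (f - g) * k" by (simp add: algebra_simps)
  then show ?thesis using assms unfolding fps_cong_def by (metis dvd_add dvd_mult dvd_mult2)
qed

lemma fps_cong_sum: "(\<And>i. i \<in> A \<Longrightarrow> fps_cong n (f i) (g i)) \<Longrightarrow> fps_cong n (sum f A) (sum g A)"
  by (induction A rule: infinite_finite_induct) (auto intro: fps_cong_add)

lemma fps_cong_prod: "(\<And>i. i \<in> A \<Longrightarrow> fps_cong n (f i) (g i)) \<Longrightarrow> fps_cong n (prod f A) (prod g A)"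
  by (induction A rule: infinite_finite_induct) (auto intro: fps_cong_mult)

lemma fps_cong_inverse:
  fixes f g :: "'a::field fps"
  assumes "fps_cong n f g" "fps_nth f 0 \<noteq> 0" "fps_nth g 0 \<noteq> 0"
  shows "fps_cong n (inverse f) (inverse g)"
proof -
  have "inverse f - inverse g = inverse f * inverse g * (g - f)"
    using assms(2,3) by (simp add: algebra_simps inverse_mult_eq_1 inverse_mult_eq_1')
  moreover have "fps_X^n dvd (g - f)"
    using fps_cong_sym[OF assms(1)] unfolding fps_cong_def .
  ultimately show ?thesis unfolding fps_cong_def by simp
qed

lemma fps_cong_mult_X_power:
  assumes "fps_X^m dvd e" "fps_cong k f g" "n \<le> m + k"
  shows "fps_cong n (e * f) (e * g)"
proof -
  have "fps_X^m * fps_X^k dvd e * (f - g)"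
    using assms(1,2) unfolding fps_cong_def by (rule mult_dvd_mono)
  then have "fps_X^(m + k) dvd e * f - e * g"
    by (simp add: power_add algebra_simps)
  then show ?thesis
    using assms(3) unfolding fps_cong_def by (meson dvd_trans le_imp_power_dvd)
qed

lemma fps_eq_if_cong: "(\<And>n. fps_cong n f g) \<Longrightarrow> f = g"
  by (rule fps_ext) (meson fps_cong_iff lessI)

lemma fps_stabilizing_limit:
  fixes F :: "nat \<Rightarrow> 'a::comm_ring_1 fps"
  assumes stable: "\<And>N M. N \<le> M \<Longrightarrow> fps_cong N (F M) (F N)"
  obtains L where "F \<longlonglongrightarrow> L" "\<And>N. fps_cong N L (F N)"
proof
  define L where "L = Abs_fps (\<lambda>i. fps_nth (F (Suc i)) i)"
  have coeff: "fps_nth (F M) i = fps_nth L i" if "i < M" for i M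
    using stable[of "Suc i" M] that by (simp add: L_def fps_cong_iff)
  show "F \<longlonglongrightarrow> L"
  proof (rule tendsto_fpsI)
    show "eventually (\<lambda>M. fps_nth (F M) i = fps_nth L i) sequentially" for i
      using eventually_gt_at_top[of i] by eventually_elim (rule coeff)
  qed
  show "fps_cong N L (F N)" for N
    by (simp add: fps_cong_iff coeff)
qed

lemma fps_summable_cong:
  fixes a :: "nat \<Rightarrow> 'a::comm_ring_1 fps"
  assumes dvd: "\<And>n. fps_X^n dvd a n"
  shows "summable a" "fps_cong N (suminf a) (\<Sum>n<N. a n)"
proof -
  have partial_sums: "fps_cong N (\<Sum>n<M. a n) (\<Sum>n<N. a n)" if "N \<le> M" for N M
  proof -
    have "(\<Sum>n<M. a n) - (\<Sum>n<N. a n) = (\<Sum>n\<in>{N..<M}. a n)"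
      using that by (simp add: sum_diff_nat_ivl flip: atLeast0LessThan)
    moreover have "fps_X^N dvd (\<Sum>n\<in>{N..<M}. a n)"
      by (intro dvd_sum) (meson atLeastLessThan_iff dvd dvd_trans le_imp_power_dvd)
    ultimately show ?thesis by (simp add: fps_cong_def)
  qed
  obtain L where lim: "(\<lambda>M. \<Sum>n<M. a n) \<longlonglongrightarrow> L" and cong: "\<And>N. fps_cong N L (\<Sum>n<N. a n)"
    using fps_stabilizing_limit[of "\<lambda>M. \<Sum>n<M. a n", OF partial_sums] by blast
  from lim have "a sums L" by (simp add: sums_def)
  then show "summable a" "fps_cong N (suminf a) (\<Sum>n<N. a n)"
    using cong by (auto simp: sums_iff)
qed

lemma fps_convergent_prod_cong:
  fixes p :: "nat \<Rightarrow> 'a::idom fps"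
  assumes factor: "\<And>k. fps_cong (Suc k) (p k) 1"
  shows "convergent_prod p" "fps_cong N (prodinf p) (\<Prod>k<N. p k)"
proof -
  have partial_products: "fps_cong N (\<Prod>k<M. p k) (\<Prod>k<N. p k)" if "N \<le> M" for N M
    using that
  proof (induction M rule: dec_induct)
    case (step M)
    have "fps_cong N (p M) 1"
      using fps_cong_mono[OF _ factor[of M]] step.hyps(1) by simp
    from fps_cong_mult[OF step.IH this] show ?case by simp
  qed simp
  obtain L where lim: "(\<lambda>M. \<Prod>k<M. p k) \<longlonglongrightarrow> L" and cong: "\<And>N. fps_cong N L (\<Prod>k<N. p k)"
    using fps_stabilizing_limit[of "\<lambda>M. \<Prod>k<M. p k", OF partial_products] by blast
  have "fps_nth L 0 = 1"
    using cong[of 1] factor[of 0] by (simp add: fps_cong_iff)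
  then have "L \<noteq> 0" by auto
  moreover have "(\<lambda>n. \<Prod>k\<le>n. p (k + 0)) \<longlonglongrightarrow> L"
    using LIMSEQ_Suc[OF lim] by (simp add: lessThan_Suc_atMost)
  ultimately have "raw_has_prod p 0 L" by (simp add: raw_has_prod_def)
  then show "convergent_prod p" by (auto simp: convergent_prod_def)
  from \<open>raw_has_prod p 0 L\<close> have "p has_prod L" by (simp add: has_prod_def)
  then show "fps_cong N (prodinf p) (\<Prod>k<N. p k)"
    using cong has_prod_unique[of p L] by simp
qed

text \<open>The finite q-product (1 - c X^m) (1 - c X^(m+1)) ... (1 - c X^n); in particular
  qprod 1 1 n is the q-factorial (q;q)_n and qprod c 1 n is (cq;q)_n.\<close>

definition qprod :: "'a::comm_ring_1 fps \<Rightarrow> nat \<Rightarrow> nat \<Rightarrow> 'a fps" where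
  "qprod c m n = (\<Prod>k\<in>{m..n}. 1 - c * fps_X^k)"

lemma qprod_cong_one: "fps_cong m (qprod c m n) 1"
proof -
  have "fps_cong m (\<Prod>k\<in>{m..n}. 1 - c * fps_X^k) (\<Prod>k\<in>{m..n}. 1)"
  proof (rule fps_cong_prod)
    fix k assume "k \<in> {m..n}"
    then have "fps_X^m dvd c * fps_X^k" by (simp add: le_imp_power_dvd)
    then show "fps_cong m (1 - c * fps_X^k) 1" by (simp add: fps_cong_def)
  qed
  then show ?thesis by (simp add: qprod_def)
qed

lemma qprod_nth_0: "0 < m \<Longrightarrow> fps_nth (qprod c m n) 0 = 1"
  using qprod_cong_one[of m c n] by (simp add: fps_cong_iff)

lemma qprod_split:
  assumes "m \<le> Suc n" "n \<le> N"
  shows "qprod c m N = qprod c m n * qprod c (Suc n) N"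
proof -
  have "{m..N} = {m..n} \<union> {Suc n..N}" using assms by auto
  then show ?thesis unfolding qprod_def by (simp add: prod.union_disjoint)
qed

lemma fps_unit_mult_inverse:
  fixes f g :: "'a::field fps"
  assumes "fps_nth f 0 \<noteq> 0"
  shows "f * inverse (g * f) = inverse g"
  using inverse_mult_eq_1'[OF assms] by (simp add: fps_inverse_mult mult.left_commute)

lemma inverse_qfact_recurrence:
  "inverse (qprod 1 1 n) = (1 - fps_X^Suc n) * inverse (qprod 1 1 (Suc n) :: 'a::field fps)"
proof -
  have "qprod 1 1 (Suc n) = qprod 1 1 n * (1 - fps_X^Suc n :: 'a fps)"
    using qprod_split[of 1 n "Suc n" 1] by (simp add: qprod_def)
  then show ?thesis by (simp add: fps_unit_mult_inverse)
qed

lemma inverse_qfact_cong: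
  assumes "n \<le> N"
  shows "fps_cong (Suc n) (inverse (qprod 1 1 n)) (inverse (qprod 1 1 N :: 'a::field fps))"
proof -
  have "fps_cong (Suc n) (inverse (qprod 1 (Suc n) N)) (inverse (1 :: 'a fps))"
    by (intro fps_cong_inverse qprod_cong_one) (simp_all add: qprod_nth_0)
  then have "fps_cong (Suc n) (inverse (qprod 1 1 n) * 1)
      (inverse (qprod 1 1 n) * inverse (qprod 1 (Suc n) N :: 'a fps))"
    by (intro fps_cong_mult fps_cong_refl) (simp add: fps_cong_sym)
  moreover have "inverse (qprod 1 1 N) = inverse (qprod 1 1 n) * inverse (qprod 1 (Suc n) N :: 'a fps)"
    using qprod_split[of 1 n N "1 :: 'a fps"] assms by (simp add: fps_inverse_mult)
  ultimately show ?thesis by simp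
qed

lemma le_Suc_choose_two: "m \<le> Suc m choose 2"
  by (induction m) (simp_all add: Suc_choose_two_Suc)

lemma euler_term_X_dvd: "fps_X^m dvd euler_term fps_X c m"
proof -
  have "fps_X^m dvd (fps_X^(Suc m choose 2) :: 'a fps)"
    by (rule le_imp_power_dvd) (rule le_Suc_choose_two)
  then show ?thesis unfolding euler_term_def by (metis dvd_mult dvd_mult2)
qed

lemma partial_sum_identity:
  fixes c :: "'a::field fps"
  shows "(\<Sum>n\<le>N. fps_X^n * inverse (qprod 1 1 n * qprod c 1 n))
       = (\<Sum>m\<le>N. euler_term fps_X c m * inverse (qprod 1 1 (N - m))) * inverse (qprod c 1 N)"
proof -
  have "(\<Sum>n\<le>N. fps_X^n * qprod c (Suc n) N * inverse (qprod 1 1 n))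
      = (\<Sum>m\<le>N. euler_term fps_X c m * inverse (qprod 1 1 (N - m)))"
    using finite_q_identity[of "\<lambda>n. inverse (qprod 1 1 n)" fps_X c N, OF _ inverse_qfact_recurrence]
    by (simp add: qprod_def)
  moreover have "fps_X^n * qprod c (Suc n) N * inverse (qprod 1 1 n) * inverse (qprod c 1 N)
      = fps_X^n * inverse (qprod 1 1 n * qprod c 1 n)" if "n \<le> N" for n
  proof -
    have "qprod c (Suc n) N * inverse (qprod c 1 N) = inverse (qprod c 1 n)"
      using qprod_split[of 1 n N c] that by (simp add: fps_unit_mult_inverse qprod_nth_0)
    then show ?thesis by (simp add: fps_inverse_mult mult.assoc mult.left_commute)
  qed
  then have "(\<Sum>n\<le>N. fps_X^n * qprod c (Suc n) N * inverse (qprod 1 1 n) * inverse (qprod c 1 N))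
      = (\<Sum>n\<le>N. fps_X^n * inverse (qprod 1 1 n * qprod c 1 n))"
    by (intro sum.cong) simp_all
  ultimately show ?thesis by (simp flip: sum_distrib_right)
qed

text \<open>Truncation of the convolution: the theta term c_m is divisible by X^m, and the
  inverse q-factorial of index N - m agrees with that of index N modulo X^(N-m+1).\<close>

lemma euler_convolution_cong:
  fixes c :: "'a::field fps"
  shows "fps_cong N (\<Sum>m\<le>N. euler_term fps_X c m * inverse (qprod 1 1 (N - m)))
                    ((\<Sum>m<N. euler_term fps_X c m) * inverse (qprod 1 1 N))"
proof -
  have "(\<Sum>m\<le>N. euler_term fps_X c m * inverse (qprod 1 1 (N - m)))
      = (\<Sum>m<N. euler_term fps_X c m * inverse (qprod 1 1 (N - m))) + euler_term fps_X c N"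
    by (simp add: lessThan_Suc_atMost[symmetric] qprod_def)
  moreover have "fps_cong N ((\<Sum>m<N. euler_term fps_X c m * inverse (qprod 1 1 (N - m))) + euler_term fps_X c N)
      ((\<Sum>m<N. euler_term fps_X c m * inverse (qprod 1 1 N)) + 0)"
  proof (intro fps_cong_add fps_cong_sum)
    fix m assume "m \<in> {..<N}"
    then show "fps_cong N (euler_term fps_X c m * inverse (qprod 1 1 (N - m)))
                 (euler_term fps_X c m * inverse (qprod 1 1 N))"
      by (intro fps_cong_mult_X_power[OF euler_term_X_dvd inverse_qfact_cong]) auto
  next
    show "fps_cong N (euler_term fps_X c N) 0"
      using euler_term_X_dvd by (simp add: fps_cong_def)
  qed
  ultimately show ?thesis by (simp add: sum_distrib_right)
qed

lemma inverse_qprods: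
  fixes c :: "'a::field fps"
  shows "inverse (qprod 1 1 N * qprod c 1 N)
       = (\<Prod>k<N. inverse ((1 - fps_X^Suc k) * (1 - c * fps_X^Suc k)))"
  by (simp add: qprod_def inverse_prod_fps prod.distrib prod.atLeast1_atMost_eq fps_inverse_mult)

theorem q_series_identity:
  fixes c :: "'a::field fps"
  defines "a \<equiv> \<lambda>n. fps_X ^ (Suc n) * inverse (\<Prod>k=1..Suc n. (1 - fps_X ^ k) * (1 - c * fps_X ^ k))"
      and "p \<equiv> \<lambda>k. inverse ((1 - fps_X ^ (Suc k)) * (1 - c * fps_X ^ (Suc k)))"
  shows "summable a \<and> summable (euler_term fps_X c) \<and> convergent_prod p
       \<and> 1 + suminf a = suminf (euler_term fps_X c) * prodinf p"
proof -
  have a_eq: "a n = fps_X^Suc n * inverse (qprod 1 1 (Suc n) * qprod c 1 (Suc n))" for n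
    by (simp add: a_def qprod_def prod.distrib)
  have "fps_X^n dvd a n" for n
    unfolding a_eq by (simp add: dvd_mult2 le_imp_power_dvd)
  note a_sum = fps_summable_cong[OF this]
  note euler_sum = fps_summable_cong[OF euler_term_X_dvd[of _ c]]
  have "fps_cong (Suc k) (p k) 1" for k
  proof -
    have "fps_cong (Suc k) (inverse (qprod 1 (Suc k) (Suc k) * qprod c (Suc k) (Suc k))) (inverse (1 * 1))"
      by (intro fps_cong_inverse fps_cong_mult qprod_cong_one) (simp_all add: qprod_nth_0)
    then show ?thesis by (simp add: p_def qprod_def)
  qed
  note p_prod = fps_convergent_prod_cong[OF this]
  have inverse_qprod_factors: "inverse (qprod 1 1 N) * inverse (qprod c 1 N) = (\<Prod>k<N. p k)" for N
    unfolding p_def fps_inverse_mult[symmetric] by (rule inverse_qprods)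
  have "fps_cong N (1 + suminf a) (suminf (euler_term fps_X c) * prodinf p)" for N
  proof -
    have "fps_cong N (1 + suminf a) (1 + (\<Sum>n<N. a n))"
      by (intro fps_cong_add a_sum fps_cong_refl)
    also have "1 + (\<Sum>n<N. a n) = (\<Sum>n\<le>N. fps_X^n * inverse (qprod 1 1 n * qprod c 1 n))"
      by (simp add: a_eq sum.atMost_shift qprod_def)
    also have "\<dots> = (\<Sum>m\<le>N. euler_term fps_X c m * inverse (qprod 1 1 (N - m))) * inverse (qprod c 1 N)"
      by (rule partial_sum_identity)
    also have "fps_cong N \<dots> ((\<Sum>m<N. euler_term fps_X c m) * inverse (qprod 1 1 N) * inverse (qprod c 1 N))"
      by (intro fps_cong_mult euler_convolution_cong fps_cong_refl)
    also have "\<dots> = (\<Sum>m<N. euler_term fps_X c m) * (\<Prod>k<N. p k)"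
      by (simp only: mult.assoc inverse_qprod_factors)
    also have "fps_cong N \<dots> (suminf (euler_term fps_X c) * prodinf p)"
      using fps_cong_mult[OF fps_cong_sym[OF euler_sum(2)] fps_cong_sym[OF p_prod(2)]] .
    finally show ?thesis .
  qed
  then have "1 + suminf a = suminf (euler_term fps_X c) * prodinf p"
    by (rule fps_eq_if_cong)
  with a_sum(1) euler_sum(1) p_prod(1) show ?thesis by blast
qed

theorem mainTheorem2:
  shows "summable (\<lambda>n. qvar ^ (Suc n) *
            inverse (\<Prod>k=1..Suc n. (1 - qvar ^ k) * (1 - bconst * qvar ^ k)))
       \<and> summable (\<lambda>n. (- 1) ^ n * qvar ^ (Suc n choose 2) * bconst ^ n)
       \<and> convergent_prod (\<lambda>k. inverse ((1 - qvar ^ (Suc k)) * (1 - bconst * qvar ^ (Suc k))))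
       \<and> 1 + (\<Sum>n. qvar ^ (Suc n) *
            inverse (\<Prod>k=1..Suc n. (1 - qvar ^ k) * (1 - bconst * qvar ^ k)))
         = (\<Sum>n. (- 1) ^ n * qvar ^ (Suc n choose 2) * bconst ^ n)
           * (\<Prod>k. inverse ((1 - qvar ^ (Suc k)) * (1 - bconst * qvar ^ (Suc k))))"
  by (rule q_series_identity[of bconst, unfolded euler_term_def[abs_def]])

end
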